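(* Let $\mathbf{S}=(1^{n_1},\ast^{m_1},\ldots,1^{n_r},\ast^{m_r})$ with $r\ge1$, all $n_j,m_j\ge1$ and $n_1+\cdots+n_r=m_1+\cdots+m_r=n$ (so $\mathbf{S}$ is a balanced string of length $2n$ with $r$ runs). Then \[ |NC_2(\mathbf{S})|\le\frac{r^{r-1}}{r!}(1+n)^{r-1}. \]
   Context: $1^k$ denotes $k$ consecutive entries $1$ (similarly $\ast^k$). $NC_2(\mathbf{S})$ is the set of non-crossing pairings of the $2n$ positions of $\mathbf{S}$ in which each pair joins a position carrying $1$ with a position carrying $\ast$. *)

theory Defs
  imports Complex_Main
begin

text \<open>Strings over the alphabet {1, *}: True encodes 1, False encodes *.\<close>

definition run_string :: "nat list \<Rightarrow> nat list \<Rightarrow> bool list" where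
  "run_string ns ms = concat (map2 (\<lambda>a b. replicate a True @ replicate b False) ns ms)"

definition NC2 :: "bool list \<Rightarrow> (nat \<times> nat) set set" where
  "NC2 S = {P. P \<subseteq> {(i, j). i < j \<and> j < length S}
              \<and> (\<forall>k < length S. \<exists>!p \<in> P. fst p = k \<or> snd p = k)
              \<and> (\<forall>(i, j) \<in> P. S ! i \<noteq> S ! j)
              \<and> (\<forall>(a, c) \<in> P. \<forall>(b, d) \<in> P. \<not> (a < b \<and> b < c \<and> c < d))}"

end

theory Submission
  imports Defs
begin

text \<open>
  Let \<open>ch w\<close> be the number of cyclic letter changes of a binary word \<open>w\<close>; the run string has
  \<open>ch \<le> 2r\<close>. We prove \<open>|NC\<^sub>2(w)| \<le> (n + 1)\<^sup>f\<close> with \<open>n = |w|/2\<close> and \<open>f = ch w/2 - 1\<close>, by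
  induction on \<open>|w|\<close>; this is stronger than the claim because \<open>r! \<le> r\<^sup>r\<^sup>-\<^sup>1\<close>.
  Write \<open>w = x\<^sup>p y \<dots>\<close>. In a pairing the first \<open>y\<close> is joined either to its left neighbour, which
  leaves a shorter word with at most as many changes (at most \<open>n\<^sup>f\<close> pairings), or to a later \<open>x\<close>
  enclosing a balanced factor. In the latter case the pairing splits into one of the enclosed
  factor and one of the outer word, whose change numbers add up to at most \<open>ch w\<close>, losing one
  factor \<open>n\<close>. Each admissible \<open>x\<close> is preceded by its own change from \<open>y\<close> to \<open>x\<close>, and the last
  \<open>y\<close> of the word yields one more, so there are at most \<open>f\<close> of them. Altogether
  \<open>|NC\<^sub>2(w)| \<le> n\<^sup>f + f n\<^sup>f\<^sup>-\<^sup>1 \<le> (n + 1)\<^sup>f\<close>.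
\<close>

subsection \<open>Letter changes\<close>

fun changes :: "'a list \<Rightarrow> nat" where
  "changes [] = 0"
| "changes [a] = 0"
| "changes (a # b # xs) = (if a = b then 0 else 1) + changes (b # xs)"

lemma changes_Cons: "changes (a # xs) = changes xs + (if xs \<noteq> [] \<and> a \<noteq> hd xs then 1 else 0)"
  by (cases xs) auto

lemma changes_append:
  "changes (xs @ ys)
     = changes xs + changes ys + (if xs \<noteq> [] \<and> ys \<noteq> [] \<and> last xs \<noteq> hd ys then 1 else 0)"
  by (induction xs rule: changes.induct) (auto simp: changes_Cons)

lemma changes_replicate [simp]: "changes (replicate n x) = 0"
proof (induction n)
  case (Suc n)
  then show ?case by (cases n) (auto simp: changes_Cons)
qed simp

lemma changes_ge_hd_last: "xs \<noteq> [] \<Longrightarrow> (if hd xs \<noteq> last xs then 1 else 0) \<le> changes xs"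
  by (induction xs rule: changes.induct) (auto simp: changes_Cons)

lemma changes_ge_through:
  assumes "a \<in> set u"
  shows "(if hd u \<noteq> a then 1 else 0) + (if a \<noteq> last u then 1 else 0) \<le> changes u"
proof -
  obtain xs ys where u: "u = xs @ a # ys" using assms by (metis split_list)
  show ?thesis
    using changes_ge_hd_last[of xs] changes_ge_hd_last[of "a # ys"]
    unfolding u changes_append by (cases "xs = []") (auto split: if_splits)
qed

lemma changes_eq_card: "changes w = card {i. Suc i < length w \<and> w ! i \<noteq> w ! Suc i}"
proof (induction w rule: changes.induct)
  case (3 a b xs)
  let ?S = "\<lambda>w. {i. Suc i < length w \<and> w ! i \<noteq> w ! Suc i}"
  have "?S (a # b # xs) = (if a \<noteq> b then {0} else {}) \<union> Suc ` ?S (b # xs)"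
  proof (rule set_eqI)
    show "i \<in> ?S (a # b # xs) \<longleftrightarrow> i \<in> (if a \<noteq> b then {0} else {}) \<union> Suc ` ?S (b # xs)" for i
      by (cases i) auto
  qed
  then have "card (?S (a # b # xs)) = (if a \<noteq> b then 1 else 0) + card (?S (b # xs))"
    by (auto simp: card_image)
  then show ?case using 3 by simp
qed auto

definition cyclic_changes :: "'a list \<Rightarrow> nat" where
  "cyclic_changes w = changes w + (if w \<noteq> [] \<and> last w \<noteq> hd w then 1 else 0)"

lemma cyclic_changes_eq_card:
  "cyclic_changes w = card {i. i < length w \<and> w ! i \<noteq> w ! (Suc i mod length w)}"
proof (cases "w = []")
  case True
  then show ?thesis by (simp add: cyclic_changes_def)
next
  case False
  let ?L = "{i. Suc i < length w \<and> w ! i \<noteq> w ! Suc i}"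
  let ?W = "if last w \<noteq> hd w then {length w - 1} else {}"
  have "{i. i < length w \<and> w ! i \<noteq> w ! (Suc i mod length w)} = ?L \<union> ?W"
  proof (rule set_eqI)
    fix i
    show "i \<in> {i. i < length w \<and> w ! i \<noteq> w ! (Suc i mod length w)} \<longleftrightarrow> i \<in> ?L \<union> ?W"
    proof (cases "Suc i = length w")
      case True
      then have "w ! i = last w" "w ! (Suc i mod length w) = hd w"
        using False by (simp_all add: last_conv_nth hd_conv_nth flip: True)
      then show ?thesis using True by auto
    qed (use False in auto)
  qed
  moreover have "finite ?L" by (rule finite_subset[of _ "{..<length w}"]) auto
  ultimately show ?thesis
    using False by (auto simp: cyclic_changes_def changes_eq_card card_insert_disjoint)
qed

lemma cyclic_changes_rotate: "cyclic_changes (xs @ ys) = cyclic_changes (ys @ xs)"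
  unfolding cyclic_changes_def changes_append by (cases "xs = []"; cases "ys = []") auto

lemma cyclic_changes_append_ge: "cyclic_changes xs \<le> cyclic_changes (xs @ ys)"
proof (cases "xs = [] \<or> ys = []")
  case True
  then show ?thesis by (auto simp: cyclic_changes_def)
next
  case False
  then have "(if hd ys \<noteq> last ys then 1 else 0) \<le> changes ys"
    using changes_ge_hd_last[of ys] False by auto
  then show ?thesis
    using False unfolding cyclic_changes_def changes_append by (auto split: if_splits)
qed

lemma cyclic_changes_delete_infix: "cyclic_changes (xs @ zs) \<le> cyclic_changes (xs @ ys @ zs)"
proof -
  have "cyclic_changes (xs @ zs) = cyclic_changes (zs @ xs)" by (rule cyclic_changes_rotate)
  also have "\<dots> \<le> cyclic_changes ((zs @ xs) @ ys)" by (rule cyclic_changes_append_ge)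
  also have "\<dots> = cyclic_changes (xs @ ys @ zs)" using cyclic_changes_rotate[of zs "xs @ ys"] by simp
  finally show ?thesis .
qed

lemma cyclic_changes_ge_2:
  assumes "a \<in> set u" "b \<in> set u" "a \<noteq> b"
  shows "2 \<le> cyclic_changes u"
proof (cases "hd u = a")
  case True
  then show ?thesis
    using changes_ge_through[OF assms(2)] assms(3) by (auto simp: cyclic_changes_def split: if_splits)
next
  case False
  then show ?thesis
    using changes_ge_through[OF assms(1)] assms by (auto simp: cyclic_changes_def split: if_splits)
qed

lemma cyclic_changes_remove_pair:
  assumes "xs \<noteq> []" "last xs = x" "x \<noteq> y"
  shows "cyclic_changes I + cyclic_changes (xs @ Z) \<le> cyclic_changes (xs @ y # I @ x # Z)"
  using assms changes_ge_hd_last[of I]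
  by (cases Z; cases I) (auto simp: cyclic_changes_def changes_append changes_Cons split: if_splits)

lemma cyclic_changes_remove_adjacent_pair:
  assumes "xs \<noteq> []" "last xs = x" "x \<noteq> y"
  shows "cyclic_changes (xs @ Z) + 2 \<le> cyclic_changes (xs @ y # x # Z)"
  using assms by (cases Z) (auto simp: cyclic_changes_def changes_append changes_Cons)

lemma count_list_replicate: "count_list (replicate n a) b = (if a = b then n else 0)"
  by (induction n) auto

lemma count_list_eq_card_nth: "count_list w a = card {i. i < length w \<and> w ! i = a}"
  by (simp add: count_list_eq_length_filter length_filter_conv_card eq_commute)

lemma count_list_rotate1 [simp]: "count_list (rotate1 w) a = count_list w a"
  by (cases w) auto

text \<open>Both the changes into \<open>a\<close> and the changes out of \<open>a\<close> number \<open>count_list w a\<close> minus the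
  cyclic factors \<open>aa\<close>; the binary alphabet makes them exhaust all changes.\<close>

lemma cyclic_changes_eq_twice_card_entries:
  fixes w :: "bool list"
  shows "cyclic_changes w = 2 * card {i. i < length w \<and> w ! i \<noteq> a \<and> w ! (Suc i mod length w) = a}"
proof -
  define N where "N = length w"
  define nxt where "nxt i = w ! (Suc i mod N)" for i
  let ?stay = "{i. i < N \<and> w ! i = a \<and> nxt i = a}"
  let ?into = "{i. i < N \<and> w ! i \<noteq> a \<and> nxt i = a}"
  let ?out = "{i. i < N \<and> w ! i = a \<and> nxt i \<noteq> a}"
  have "{i. i < N \<and> nxt i = a} = {i. i < length (rotate1 w) \<and> rotate1 w ! i = a}"
    by (auto simp: N_def nxt_def nth_rotate1)
  then have "card {i. i < N \<and> nxt i = a} = card {i. i < N \<and> w ! i = a}"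
    using count_list_eq_card_nth[of "rotate1 w" a] count_list_eq_card_nth[of w a] by (simp add: N_def)
  moreover have "{i. i < N \<and> nxt i = a} = ?stay \<union> ?into" "{i. i < N \<and> w ! i = a} = ?stay \<union> ?out"
    by auto
  ultimately have "card ?stay + card ?into = card ?stay + card ?out"
    by (simp add: card_Un_disjoint disjoint_iff)
  moreover have "{i. i < N \<and> w ! i \<noteq> nxt i} = ?into \<union> ?out"
    by auto
  ultimately show ?thesis
    by (simp add: cyclic_changes_eq_card card_Un_disjoint disjoint_iff N_def nxt_def)
qed

subsection \<open>Non-crossing pairings\<close>

lemma NC2D:
  assumes "P \<in> NC2 w"
  shows "\<And>i j. (i, j) \<in> P \<Longrightarrow> i < j \<and> j < length w"
    and "\<And>k. k < length w \<Longrightarrow> \<exists>!q\<in>P. fst q = k \<or> snd q = k"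
    and "\<And>i j. (i, j) \<in> P \<Longrightarrow> w ! i \<noteq> w ! j"
    and "\<And>a b c d. (a, c) \<in> P \<Longrightarrow> (b, d) \<in> P \<Longrightarrow> \<not> (a < b \<and> b < c \<and> c < d)"
  using assms unfolding NC2_def by blast+

lemma NC2I:
  assumes "\<And>i j. (i, j) \<in> P \<Longrightarrow> i < j \<and> j < length w"
    and "\<And>k. k < length w \<Longrightarrow> \<exists>!q\<in>P. fst q = k \<or> snd q = k"
    and "\<And>i j. (i, j) \<in> P \<Longrightarrow> w ! i \<noteq> w ! j"
    and "\<And>a b c d. (a, c) \<in> P \<Longrightarrow> (b, d) \<in> P \<Longrightarrow> \<not> (a < b \<and> b < c \<and> c < d)"
  shows "P \<in> NC2 w"
  using assms unfolding NC2_def by blast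

lemma NC2_pair_unique:
  assumes "P \<in> NC2 w" "q \<in> P" "q' \<in> P" "fst q = k \<or> snd q = k" "fst q' = k \<or> snd q' = k"
  shows "q = q'"
proof -
  have "k < length w" using NC2D(1)[OF assms(1), of "fst q" "snd q"] assms(2,4) by auto
  then show ?thesis using NC2D(2)[OF assms(1)] assms(2-5) by blast
qed

lemma finite_NC2: "finite (NC2 w)"
  by (rule finite_subset[of _ "Pow ({..<length w} \<times> {..<length w})"]) (auto simp: NC2_def)

lemma NC2_Nil [simp]: "NC2 [] = {{}}"
  unfolding NC2_def by auto

lemma card_NC2_pairing:
  assumes P: "P \<in> NC2 w"
  shows "card P = count_list w a"
proof -
  define end_at_a where "end_at_a q = (if w ! fst q = a then fst q else snd q)" for q :: "nat \<times> nat"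
  have "bij_betw end_at_a P {i. i < length w \<and> w ! i = a}"
  proof (rule bij_betwI')
    fix q q' assume q: "q \<in> P" "q' \<in> P"
    show "(end_at_a q = end_at_a q') = (q = q')"
    proof
      assume "end_at_a q = end_at_a q'"
      then show "q = q'" using NC2_pair_unique[OF P q] unfolding end_at_a_def by (auto split: if_splits)
    qed simp
  next
    fix q assume "q \<in> P"
    then show "end_at_a q \<in> {i. i < length w \<and> w ! i = a}"
      using NC2D(1,3)[OF P, of "fst q" "snd q"] unfolding end_at_a_def by auto
  next
    fix k assume k: "k \<in> {i. i < length w \<and> w ! i = a}"
    then obtain q where q: "q \<in> P" "fst q = k \<or> snd q = k" using NC2D(2)[OF P] by blast
    then have "end_at_a q = k"
      using NC2D(3)[OF P, of "fst q" "snd q"] k unfolding end_at_a_def by auto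
    then show "\<exists>q\<in>P. k = end_at_a q" using q by auto
  qed
  then show ?thesis by (simp add: bij_betw_same_card count_list_eq_card_nth)
qed

lemma NC2_count_list_eq: "P \<in> NC2 w \<Longrightarrow> count_list w a = count_list w b"
  using card_NC2_pairing[of P w a] card_NC2_pairing[of P w b] by simp

lemma NC2_length_eq:
  fixes w :: "bool list"
  assumes "P \<in> NC2 w"
  shows "length w = 2 * count_list w a"
proof -
  have "count_list w True + count_list w False = length w" by (induction w) auto
  then show ?thesis
    using NC2_count_list_eq[OF assms, of True False] NC2_count_list_eq[OF assms, of a True]
    by simp
qed

lemma NC2_cyclic_changes_ge_2:
  fixes w :: "bool list"
  assumes "P \<in> NC2 w" "w \<noteq> []"
  shows "2 \<le> cyclic_changes w"
proof -
  have "count_list w a \<noteq> 0" for a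
    using NC2_length_eq[OF assms(1), of a] assms(2) by (metis length_0_conv mult_0_right)
  then have "True \<in> set w" "False \<in> set w" by (auto simp: count_list_0_iff)
  then show ?thesis by (rule cyclic_changes_ge_2) simp
qed

lemma NC2_replicate: "0 < n \<Longrightarrow> NC2 (replicate n a) = {}"
  using NC2_count_list_eq[of _ "replicate n a" a "\<not> a"] by (auto simp: count_list_replicate)

lemma NC2_exists_change:
  assumes "P \<in> NC2 w" "w \<noteq> []"
  shows "\<exists>i < length w. w ! i \<noteq> w ! 0"
proof -
  obtain q where q: "q \<in> P" "fst q = 0 \<or> snd q = 0" using NC2D(2)[OF assms(1)] assms(2) by blast
  obtain i j where ij: "(i, j) \<in> P" "i = 0 \<or> j = 0" using q by (cases q) auto
  then have "i = 0" "j < length w" "w ! i \<noteq> w ! j" using NC2D(1,3)[OF assms(1) ij(1)] by auto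
  then show ?thesis by auto
qed

lemma NC2_pairs_nested_or_disjoint:
  assumes P: "P \<in> NC2 w" and "(a, b) \<in> P" "(i, j) \<in> P" "(i, j) \<noteq> (a, b)"
  shows "(a < i \<and> j < b) \<or> j < a \<or> b < i \<or> (i < a \<and> b < j)"
proof -
  have "\<not> ((a = k \<or> b = k) \<and> (i = k \<or> j = k))" for k
    using NC2_pair_unique[OF P assms(2,3), of k] assms(4) by auto
  then have "i \<noteq> a" "i \<noteq> b" "j \<noteq> a" "j \<noteq> b" by blast+
  moreover have "i < j" "a < b" using NC2D(1)[OF P] assms(2,3) by auto
  ultimately show ?thesis using NC2D(4)[OF P assms(2,3)] NC2D(4)[OF P assms(3,2)] by linarith
qed

subsection \<open>Splitting a pairing along one of its pairs\<close>

definition inner_word :: "'a list \<Rightarrow> nat \<Rightarrow> nat \<Rightarrow> 'a list" where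
  "inner_word w a b = take (b - Suc a) (drop (Suc a) w)"

definition outer_word :: "'a list \<Rightarrow> nat \<Rightarrow> nat \<Rightarrow> 'a list" where
  "outer_word w a b = take a w @ drop (Suc b) w"

lemma length_inner_outer_word:
  "a < b \<Longrightarrow> b < length w \<Longrightarrow> length (inner_word w a b) + length (outer_word w a b) + 2 = length w"
  by (simp add: inner_word_def outer_word_def)

lemma word_decomp_at_pair:
  assumes "a < b" "b < length w"
  shows "w = take a w @ w ! a # inner_word w a b @ w ! b # drop (Suc b) w"
proof -
  have "drop (b - Suc a) (drop (Suc a) w) = w ! b # drop (Suc b) w"
    using assms by (simp add: Cons_nth_drop_Suc)
  then have "drop (Suc a) w = inner_word w a b @ w ! b # drop (Suc b) w"
    unfolding inner_word_def by (metis append_take_drop_id)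
  moreover have "w = take a w @ w ! a # drop (Suc a) w"
    using assms by (simp add: id_take_nth_drop)
  ultimately show ?thesis by simp
qed

lemma cyclic_changes_outer_word_le:
  assumes "a < b" "b < length w"
  shows "cyclic_changes (outer_word w a b) \<le> cyclic_changes w"
  using cyclic_changes_delete_infix[of "take a w" "drop (Suc b) w" "w ! a # inner_word w a b @ [w ! b]"]
    word_decomp_at_pair[OF assms] by (simp add: outer_word_def)

definition restrict_pairing :: "(nat \<Rightarrow> nat) \<Rightarrow> nat \<Rightarrow> (nat \<times> nat) set \<Rightarrow> (nat \<times> nat) set" where
  "restrict_pairing h M P = {(m1, m2). m1 < M \<and> m2 < M \<and> (h m1, h m2) \<in> P}"

lemma NC2_restrict_pairing:
  assumes P: "P \<in> NC2 w"
    and mono: "\<And>m1 m2. m1 < m2 \<Longrightarrow> m2 < M \<Longrightarrow> h m1 < h m2"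
    and len: "length v = M"
    and nth: "\<And>m. m < M \<Longrightarrow> v ! m = w ! h m"
    and bound: "\<And>m. m < M \<Longrightarrow> h m < length w"
    and closed: "\<And>i j. (i, j) \<in> P \<Longrightarrow> i \<in> h ` {..<M} \<longleftrightarrow> j \<in> h ` {..<M}"
  shows "restrict_pairing h M P \<in> NC2 v"
proof (rule NC2I)
  have less_iff: "h m1 < h m2 \<longleftrightarrow> m1 < m2" if "m1 < M" "m2 < M" for m1 m2
    using mono that by (metis less_asym linorder_neqE_nat)
  then have eq_iff: "h m1 = h m2 \<longleftrightarrow> m1 = m2" if "m1 < M" "m2 < M" for m1 m2
    using that by (metis less_irrefl linorder_neqE_nat)
  show "i < j \<and> j < length v" if "(i, j) \<in> restrict_pairing h M P" for i j
  proof -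
    have ij: "i < M" "j < M" "(h i, h j) \<in> P" using that unfolding restrict_pairing_def by auto
    then have "h i < h j" using NC2D(1)[OF P] by blast
    then show ?thesis using ij less_iff len by blast
  qed
  show "v ! i \<noteq> v ! j" if "(i, j) \<in> restrict_pairing h M P" for i j
    using that NC2D(3)[OF P] nth unfolding restrict_pairing_def by auto
  show "\<not> (a < b \<and> b < c \<and> c < d)"
    if "(a, c) \<in> restrict_pairing h M P" "(b, d) \<in> restrict_pairing h M P" for a b c d
    using that NC2D(4)[OF P, of "h a" "h c" "h b" "h d"] less_iff unfolding restrict_pairing_def by auto
  show "\<exists>!q\<in>restrict_pairing h M P. fst q = k \<or> snd q = k" if "k < length v" for k
  proof -
    have k: "k < M" using that len by simp
    obtain q where q: "q \<in> P" "fst q = h k \<or> snd q = h k"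
      using NC2D(2)[OF P bound[OF k]] by blast
    then have "fst q \<in> h ` {..<M}" "snd q \<in> h ` {..<M}"
      using closed[of "fst q" "snd q"] k by auto
    then obtain m1 m2 where "m1 < M" "m2 < M" "q = (h m1, h m2)" by (cases q) auto
    then have ex: "(m1, m2) \<in> restrict_pairing h M P" "m1 = k \<or> m2 = k"
      using q eq_iff k unfolding restrict_pairing_def by auto
    have unique: "q1 = q2" if "q1 \<in> restrict_pairing h M P" "q2 \<in> restrict_pairing h M P"
      "fst q1 = k \<or> snd q1 = k" "fst q2 = k \<or> snd q2 = k" for q1 q2
      using that NC2_pair_unique[OF P, of "(h (fst q1), h (snd q1))" "(h (fst q2), h (snd q2))" "h k"]
        eq_iff unfolding restrict_pairing_def by (cases q1; cases q2) auto
    show ?thesis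
      by (rule ex1I[of _ "(m1, m2)"]) (use ex unique in auto)
  qed
qed

lemma mem_if_restrict_pairing_eq:
  assumes "restrict_pairing h M P = restrict_pairing h M P'" "(i, j) \<in> P"
    and "i \<in> h ` {..<M}" "j \<in> h ` {..<M}"
  shows "(i, j) \<in> P'"
  using assms unfolding restrict_pairing_def by (auto simp: set_eq_iff)

definition split_pairing ::
    "nat \<Rightarrow> nat \<Rightarrow> nat \<Rightarrow> (nat \<times> nat) set \<Rightarrow> (nat \<times> nat) set \<times> (nat \<times> nat) set" where
  "split_pairing n a b P =
     (restrict_pairing (\<lambda>m. Suc a + m) (b - Suc a) P,
      restrict_pairing (\<lambda>m. if m < a then m else m + (b - a) + 1) (n - (b - a) - 1) P)"

lemma image_inner_positions: "a < b \<Longrightarrow> (\<lambda>m. Suc a + m) ` {..<b - Suc a} = {a<..<b}"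
proof (intro equalityI subsetI)
  fix i assume "a < b" "i \<in> {a<..<b}"
  then have "i = Suc a + (i - Suc a)" "i - Suc a < b - Suc a" by auto
  then show "i \<in> (\<lambda>m. Suc a + m) ` {..<b - Suc a}" by blast
qed auto

lemma image_outer_positions:
  fixes a b n :: nat
  assumes "a < b" "b < n"
  shows "(\<lambda>m. if m < a then m else m + (b - a) + 1) ` {..<n - (b - a) - 1}
    = {i. i < n \<and> (i < a \<or> b < i)}"
    (is "?h ` ?M = ?O")
proof (intro equalityI subsetI)
  fix i assume i: "i \<in> ?O"
  show "i \<in> ?h ` ?M"
  proof (cases "i < a")
    case True
    moreover have "i < n - (b - a) - 1" using True assms by arith
    ultimately have "i = ?h i" "i \<in> ?M" by auto
    then show ?thesis by blast
  next
    case False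
    then have "i = ?h (i - (b - a) - 1)" "i - (b - a) - 1 \<in> ?M" using i assms by auto
    then show ?thesis by blast
  qed
qed (use assms in auto)

lemma NC2_pair_separates:
  assumes P: "P \<in> NC2 w" and "(a, b) \<in> P" "(i, j) \<in> P" "(i, j) \<noteq> (a, b)"
  shows "(i \<in> {a<..<b} \<and> j \<in> {a<..<b})
    \<or> (i \<in> {k. k < length w \<and> (k < a \<or> b < k)} \<and> j \<in> {k. k < length w \<and> (k < a \<or> b < k)})"
  using NC2_pairs_nested_or_disjoint[OF assms] NC2D(1)[OF P] assms(3) by fastforce

lemma split_pairing_NC2:
  assumes P: "P \<in> NC2 w" and ab: "(a, b) \<in> P"
  shows "split_pairing (length w) a b P \<in> NC2 (inner_word w a b) \<times> NC2 (outer_word w a b)"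
proof -
  have "a < b" "b < length w" using NC2D(1)[OF P ab] by auto
  note positions = image_inner_positions[OF \<open>a < b\<close>] image_outer_positions[OF \<open>a < b\<close> \<open>b < length w\<close>]
  have sides: "(i \<in> {a<..<b} \<longleftrightarrow> j \<in> {a<..<b})
      \<and> (i \<in> {k. k < length w \<and> (k < a \<or> b < k)} \<longleftrightarrow> j \<in> {k. k < length w \<and> (k < a \<or> b < k)})"
    if "(i, j) \<in> P" for i j
    using NC2_pair_separates[OF P ab that] \<open>a < b\<close> \<open>b < length w\<close> by (cases "(i, j) = (a, b)") auto
  have "restrict_pairing (\<lambda>m. Suc a + m) (b - Suc a) P \<in> NC2 (inner_word w a b)"
    by (rule NC2_restrict_pairing[OF P _ _ _ _ sides[THEN conjunct1, folded positions(1)]])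
      (use \<open>a < b\<close> \<open>b < length w\<close> in \<open>auto simp: inner_word_def\<close>)
  moreover have "restrict_pairing (\<lambda>m. if m < a then m else m + (b - a) + 1) (length w - (b - a) - 1) P
      \<in> NC2 (outer_word w a b)"
    by (rule NC2_restrict_pairing[OF P _ _ _ _ sides[THEN conjunct2, folded positions(2)]])
      (use \<open>a < b\<close> \<open>b < length w\<close> in \<open>auto simp: outer_word_def nth_append ac_simps\<close>)
  ultimately show ?thesis by (simp add: split_pairing_def)
qed

lemma inj_on_split_pairing: "inj_on (split_pairing (length w) a b) {P \<in> NC2 w. (a, b) \<in> P}"
proof -
  have "P \<subseteq> P'" if P: "P \<in> NC2 w" "(a, b) \<in> P" and "(a, b) \<in> P'"
    and eq: "split_pairing (length w) a b P = split_pairing (length w) a b P'" for P P'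
  proof
    fix q assume "q \<in> P"
    obtain i j where q: "q = (i, j)" by force
    have "a < b" "b < length w" using NC2D(1) P by auto
    note positions = image_inner_positions[OF \<open>a < b\<close>] image_outer_positions[OF \<open>a < b\<close> \<open>b < length w\<close>]
    note eqs = eq[unfolded split_pairing_def prod.inject, THEN conjunct1]
      eq[unfolded split_pairing_def prod.inject, THEN conjunct2]
    show "q \<in> P'"
    proof (cases "q = (a, b)")
      case False
      then show ?thesis
        using NC2_pair_separates[OF P, of i j] \<open>q \<in> P\<close>
          mem_if_restrict_pairing_eq[OF eqs(1), of i j] mem_if_restrict_pairing_eq[OF eqs(2), of i j]
        unfolding q positions by blast
    qed (use that in simp)
  qed
  then show ?thesis by (intro inj_onI) (simp add: subset_antisym)
qed

lemma card_NC2_with_pair_le: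
  "card {P \<in> NC2 w. (a, b) \<in> P} \<le> card (NC2 (inner_word w a b)) * card (NC2 (outer_word w a b))"
proof -
  have "card {P \<in> NC2 w. (a, b) \<in> P} \<le> card (NC2 (inner_word w a b) \<times> NC2 (outer_word w a b))"
    by (rule card_inj_on_le[OF inj_on_split_pairing]) (use split_pairing_NC2 finite_NC2 in blast)+
  then show ?thesis by (simp add: card_cartesian_product)
qed

lemma card_NC2_with_adjacent_pair_le:
  "card {P \<in> NC2 w. (a, Suc a) \<in> P} \<le> card (NC2 (outer_word w a (Suc a)))"
  using card_NC2_with_pair_le[of w a "Suc a"] by (simp add: inner_word_def)

subsection \<open>Partners of the first letter change\<close>

lemma obtain_first_change:
  assumes "i < length w" "w ! i \<noteq> w ! 0"
  obtains p where "0 < p" "p < length w" "\<And>i. i < p \<Longrightarrow> w ! i = w ! 0" "w ! p \<noteq> w ! 0"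
proof
  define p where "p = (LEAST i. i < length w \<and> w ! i \<noteq> w ! 0)"
  show "p < length w" "w ! p \<noteq> w ! 0"
    using LeastI[of "\<lambda>i. i < length w \<and> w ! i \<noteq> w ! 0", OF conjI[OF assms]] unfolding p_def by auto
  then show "0 < p" by (cases p) auto
  show "w ! i = w ! 0" if "i < p" for i
    using not_less_Least[of i "\<lambda>i. i < length w \<and> w ! i \<noteq> w ! 0"] that \<open>p < length w\<close>
    unfolding p_def by auto
qed

definition partner_candidates :: "bool list \<Rightarrow> nat \<Rightarrow> nat set" where
  "partner_candidates w p = {k. p < k \<and> k < length w \<and> w ! k \<noteq> w ! p
     \<and> NC2 (inner_word w p k) \<noteq> {} \<and> NC2 (outer_word w p k) \<noteq> {}}"

lemma finite_partner_candidates: "finite (partner_candidates w p)"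
  unfolding partner_candidates_def by simp

text \<open>A partner \<open>i < p - 1\<close> of \<open>p\<close> would enclose a nonempty block of equal letters, which has
  no pairing.\<close>

lemma NC2_first_change_partner:
  assumes P: "P \<in> NC2 w" and p: "0 < p" "p < length w"
    and prefix: "\<And>i. i < p \<Longrightarrow> w ! i = x"
  shows "(p - 1, p) \<in> P \<or> (\<exists>k \<in> partner_candidates w p. (p, k) \<in> P)"
proof -
  obtain q where q: "q \<in> P" "fst q = p \<or> snd q = p" using NC2D(2)[OF P p(2)] by blast
  obtain i j where ij: "(i, j) \<in> P" "i = p \<or> j = p" using q by (cases q) auto
  have ij_lt: "i < j" "j < length w" using NC2D(1)[OF P ij(1)] by auto
  note nonempty = split_pairing_NC2[OF P ij(1)]
  show ?thesis
  proof (cases "i = p")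
    case True
    then have "j \<in> partner_candidates w p"
      using ij_lt nonempty NC2D(3)[OF P ij(1)] unfolding partner_candidates_def by auto
    then show ?thesis using ij True by blast
  next
    case False
    then have j: "j = p" using ij by auto
    have "inner_word w i p = replicate (p - Suc i) x"
      using prefix p ij_lt j by (intro nth_equalityI) (auto simp: inner_word_def)
    then have "\<not> i < p - 1" using nonempty j NC2_replicate[of "p - Suc i" x] by auto
    then show ?thesis using ij(1) ij_lt j by (metis Suc_pred' diff_Suc_1 less_antisym p(1))
  qed
qed

lemma cyclic_changes_partner_split:
  fixes w :: "bool list"
  assumes p: "0 < p" and prefix: "\<And>i. i < p \<Longrightarrow> w ! i = x" and change: "w ! p \<noteq> x"
    and k: "k \<in> partner_candidates w p"
  shows "(cyclic_changes (inner_word w p k) div 2 - 1)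
    + (cyclic_changes (outer_word w p k) div 2 - 1) + 1 \<le> cyclic_changes w div 2 - 1"
proof -
  define I Ou where "I = inner_word w p k" and "Ou = outer_word w p k"
  have pk: "p < k" "k < length w" "w ! k = x" and ne: "NC2 I \<noteq> {}" "NC2 Ou \<noteq> {}"
    using k change unfolding partner_candidates_def I_def Ou_def by auto
  have "last (take p w) = w ! (p - 1)" using p pk by (cases p) (auto simp: take_Suc_conv_app_nth)
  then have pre: "take p w \<noteq> []" "last (take p w) = x"
    using p pk prefix[of "p - 1"] by auto
  have w_eq: "w = take p w @ w ! p # I @ x # drop (Suc k) w"
    using word_decomp_at_pair[of p k w] pk unfolding I_def by simp
  have Ou_eq: "Ou = take p w @ drop (Suc k) w" unfolding Ou_def outer_word_def ..
  have "2 \<le> cyclic_changes Ou"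
    using ne(2) pre(1) Ou_eq by (auto intro: NC2_cyclic_changes_ge_2)
  moreover have "cyclic_changes I + cyclic_changes Ou + (if I = [] then 2 else 0) \<le> cyclic_changes w"
  proof (cases "I = []")
    case True
    have "cyclic_changes Ou + 2 \<le> cyclic_changes (take p w @ w ! p # x # drop (Suc k) w)"
      unfolding Ou_eq by (rule cyclic_changes_remove_adjacent_pair[OF pre change[symmetric]])
    also have "take p w @ w ! p # x # drop (Suc k) w = w" by (metis True append_Nil w_eq)
    finally show ?thesis using True by (simp add: cyclic_changes_def)
  next
    case False
    have "cyclic_changes I + cyclic_changes Ou \<le> cyclic_changes w"
      unfolding Ou_eq by (subst (2) w_eq) (rule cyclic_changes_remove_pair[OF pre change[symmetric]])
    then show ?thesis using False by simp
  qed
  moreover have "I \<noteq> [] \<Longrightarrow> 2 \<le> cyclic_changes I" using ne(1) by (auto intro: NC2_cyclic_changes_ge_2)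
  ultimately show ?thesis unfolding I_def[symmetric] Ou_def[symmetric]
    by (cases "I = []") (simp_all add: cyclic_changes_def; linarith)+
qed

definition last_before :: "(nat \<Rightarrow> bool) \<Rightarrow> nat \<Rightarrow> nat" where
  "last_before Q k = Max {j. j < k \<and> Q j}"

lemma last_before:
  assumes "j < k" "Q j"
  shows "j \<le> last_before Q k" "last_before Q k < k" "Q (last_before Q k)"
    and "\<And>i. last_before Q k < i \<Longrightarrow> i < k \<Longrightarrow> \<not> Q i"
proof -
  have fin: "finite {j. j < k \<and> Q j}" and j: "j \<in> {j. j < k \<and> Q j}" using assms by auto
  then have "last_before Q k \<in> {j. j < k \<and> Q j}" unfolding last_before_def using Max_in by blast
  then show "last_before Q k < k" "Q (last_before Q k)" by auto
  show "j \<le> last_before Q k" unfolding last_before_def using Max_ge[OF fin j] .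
  show "\<not> Q i" if "last_before Q k < i" "i < k" for i
  proof
    assume "Q i"
    then have "i \<le> last_before Q k" unfolding last_before_def using that by (intro Max_ge[OF fin]) auto
    then show False using that by simp
  qed
qed

lemma inner_word_extend:
  assumes "p < k" "k \<le> k'"
  shows "inner_word w p k' = inner_word w p k @ take (k' - k) (drop k w)"
proof -
  have "k' - Suc p = (k - Suc p) + (k' - k)" using assms by simp
  moreover have "drop (k - Suc p) (drop (Suc p) w) = drop k w" using assms by simp
  ultimately show ?thesis unfolding inner_word_def by (simp add: take_add)
qed

lemma partner_candidateD:
  fixes w :: "bool list"
  assumes "w ! p \<noteq> x" "k \<in> partner_candidates w p"
  shows "p < k" "k < length w" "w ! k = x"
    and "count_list (inner_word w p k) x = count_list (inner_word w p k) (w ! p)"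
  using assms NC2_count_list_eq unfolding partner_candidates_def by auto

text \<open>The word \<open>x\<^sup>p y I x Z\<close> and its factor \<open>I\<close> are balanced, so \<open>Z\<close> contains \<open>p > 0\<close> more
  letters \<open>y\<close> than \<open>x\<close>.\<close>

lemma partner_candidate_followed_by_change:
  fixes w :: "bool list"
  assumes "NC2 w \<noteq> {}" "0 < p" "\<And>i. i < p \<Longrightarrow> w ! i = x" "w ! p \<noteq> x"
    and k: "k \<in> partner_candidates w p"
  shows "\<exists>m. k < m \<and> m < length w \<and> w ! m = w ! p"
proof -
  define y I Z where "y = w ! p" and "I = inner_word w p k" and "Z = drop (Suc k) w"
  note kD = partner_candidateD[OF assms(4) k, folded y_def I_def]
  have "take p w = replicate p x" using assms(3) kD(1,2) by (intro nth_equalityI) auto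
  then have w_eq: "w = replicate p x @ y # I @ x # Z"
    using word_decomp_at_pair[OF kD(1,2)] kD(3) unfolding y_def I_def Z_def by simp
  have "count_list w x = count_list w y" using assms(1) NC2_count_list_eq by blast
  then have "p + count_list I x + count_list Z x = count_list I y + count_list Z y"
    unfolding w_eq using assms(4) by (simp add: y_def count_list_replicate)
  then have "count_list Z y \<noteq> 0" using kD(4) assms(2) by simp
  then have "y \<in> set Z" by (metis count_notin)
  then obtain i where "i < length Z" "Z ! i = y" by (auto simp: in_set_conv_nth)
  then show ?thesis unfolding y_def Z_def by (intro exI[of _ "Suc k + i"]) auto
qed

lemma last_before_partner_candidate:
  fixes w :: "bool list"
  assumes "w ! p \<noteq> x" "k \<in> partner_candidates w p"
  defines "j \<equiv> last_before (\<lambda>j. w ! j = w ! p) k"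
  shows "p \<le> j" "j < k" "w ! j = w ! p" "\<And>m. j < m \<Longrightarrow> m \<le> k \<Longrightarrow> w ! m = x"
proof -
  note kD = partner_candidateD[OF assms(1,2)]
  note l = last_before[of p k "\<lambda>j. w ! j = w ! p", folded j_def, OF kD(1) refl]
  show "p \<le> j" "j < k" "w ! j = w ! p" using l by auto
  show "w ! m = x" if "j < m" "m \<le> k" for m
    using l(4)[of m] kD(3) that assms(1) by (cases "m = k") auto
qed

lemma inj_on_last_before_partner_candidates:
  fixes w :: "bool list"
  assumes "w ! p \<noteq> x"
  shows "inj_on (last_before (\<lambda>j. w ! j = w ! p)) (partner_candidates w p)"
proof -
  have no_collision: False
    if k: "k \<in> partner_candidates w p" "k' \<in> partner_candidates w p" "k < k'"
    and eq: "last_before (\<lambda>j. w ! j = w ! p) k = last_before (\<lambda>j. w ! j = w ! p) k'" for k k'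
  proof -
    note lb = last_before_partner_candidate[OF assms]
    have "w ! (k + i) = x" if "i < k' - k" for i
      using lb(4)[OF k(2), of "k + i"] lb(2)[OF k(1)] eq that by simp
    then have "take (k' - k) (drop k w) = replicate (k' - k) x"
      using partner_candidateD(2)[OF assms k(2)] by (intro nth_equalityI) auto
    then show False
      using inner_word_extend[of p k k' w] partner_candidateD(1,4)[OF assms k(1)]
        partner_candidateD(4)[OF assms k(2)] k(3) assms
      by (auto simp: count_list_replicate)
  qed
  show ?thesis
  proof (rule inj_onI)
    fix k k' assume "k \<in> partner_candidates w p" "k' \<in> partner_candidates w p"
      "last_before (\<lambda>j. w ! j = w ! p) k = last_before (\<lambda>j. w ! j = w ! p) k'"
    then show "k = k'"
      using no_collision[of k k'] no_collision[of k' k] by (cases k k' rule: linorder_cases) auto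
  qed
qed

text \<open>The last \<open>y\<close> before each candidate partner and the last \<open>y\<close> of the word start changes
  from \<open>y\<close> to \<open>x\<close>, all distinct because some \<open>y\<close> follows every candidate.\<close>

lemma card_partner_candidates_le:
  fixes w :: "bool list"
  assumes ne: "NC2 w \<noteq> {}" and p: "0 < p" "p < length w"
    and prefix: "\<And>i. i < p \<Longrightarrow> w ! i = x" and change: "w ! p \<noteq> x" and x: "w ! 0 = x"
  shows "2 * card (partner_candidates w p) + 2 \<le> cyclic_changes w"
proof -
  define N V D where "N = length w" and "V = partner_candidates w p"
    and "D = {i. i < length w \<and> w ! i \<noteq> x \<and> w ! (Suc i mod length w) = x}"
  define lb where "lb = last_before (\<lambda>j. w ! j = w ! p)"
  note lb = last_before_partner_candidate[OF change, folded lb_def V_def]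
  have lb_D: "lb ` V \<subseteq> D"
  proof (rule image_subsetI)
    fix k assume k: "k \<in> V"
    then have "Suc (lb k) < N" "w ! Suc (lb k) = x"
      using lb(2,4)[OF k] partner_candidateD(2)[OF change, folded V_def, OF k] unfolding N_def by auto
    then show "lb k \<in> D" using lb(3)[OF k] change unfolding D_def N_def by auto
  qed
  define q where "q = last_before (\<lambda>j. w ! j = w ! p) N"
  note lq = last_before[of p N "\<lambda>j. w ! j = w ! p", folded q_def, OF p(2)[folded N_def] refl]
  have "w ! (Suc q mod N) = x"
  proof (cases "Suc q < N")
    case False
    then have "Suc q = N" using lq(2) by simp
    then show ?thesis using x by simp
  qed (use lq(4) change in auto)
  then have "q \<in> D" using lq(2,3) change unfolding D_def N_def by auto
  moreover have "q \<notin> lb ` V"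
  proof
    assume "q \<in> lb ` V"
    then obtain k where k: "k \<in> V" "q = lb k" by blast
    obtain m where "k < m" "m < N" "w ! m = w ! p"
      using partner_candidate_followed_by_change[OF ne p(1) prefix change] k(1) unfolding V_def N_def
      by blast
    then show False using lq(4)[of m] lb(2)[OF k(1)] k(2) by auto
  qed
  ultimately have "card (insert q (lb ` V)) \<le> card D"
    using lb_D by (intro card_mono) (auto simp: D_def)
  then have "card V + 1 \<le> card D"
    using \<open>q \<notin> lb ` V\<close> inj_on_last_before_partner_candidates[OF change, folded lb_def V_def]
      finite_partner_candidates[of w p, folded V_def] by (simp add: card_image)
  moreover have "cyclic_changes w = 2 * card D"
    unfolding D_def by (rule cyclic_changes_eq_twice_card_entries)
  ultimately show ?thesis unfolding V_def by simp
qed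

lemma card_NC2_le_first_change_split:
  assumes p: "0 < p" "p < length w" and prefix: "\<And>i. i < p \<Longrightarrow> w ! i = x"
  shows "card (NC2 w) \<le> card (NC2 (outer_word w (p - 1) p))
    + (\<Sum>k\<in>partner_candidates w p. card (NC2 (inner_word w p k)) * card (NC2 (outer_word w p k)))"
proof -
  define V where "V = partner_candidates w p"
  define A where "A q = {P \<in> NC2 w. q \<in> P}" for q
  have "NC2 w \<subseteq> A (p - 1, p) \<union> (\<Union>k\<in>V. A (p, k))"
    using NC2_first_change_partner[OF _ p prefix] unfolding A_def V_def by blast
  then have "card (NC2 w) \<le> card (A (p - 1, p) \<union> (\<Union>k\<in>V. A (p, k)))"
    by (intro card_mono) (simp_all add: A_def finite_NC2 V_def finite_partner_candidates)
  also have "\<dots> \<le> card (A (p - 1, p)) + card (\<Union>k\<in>V. A (p, k))" by (rule card_Un_le)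
  also have "card (\<Union>k\<in>V. A (p, k)) \<le> (\<Sum>k\<in>V. card (A (p, k)))"
    by (rule card_UN_le) (simp add: V_def finite_partner_candidates)
  also have "card (A (p - 1, p)) \<le> card (NC2 (outer_word w (p - 1) p))"
    using card_NC2_with_adjacent_pair_le[of w "p - 1"] p(1) unfolding A_def by simp
  also have "(\<Sum>k\<in>V. card (A (p, k)))
      \<le> (\<Sum>k\<in>V. card (NC2 (inner_word w p k)) * card (NC2 (outer_word w p k)))"
    unfolding A_def by (intro sum_mono card_NC2_with_pair_le)
  finally show ?thesis unfolding V_def by simp
qed

lemma power_plus_mult_power_le: "(n::nat) ^ f + f * n ^ (f - 1) \<le> (n + 1) ^ f"
proof (induction f)
  case (Suc f)
  have "n ^ Suc f + Suc f * n ^ f = n * n ^ f + n ^ f + n * (f * n ^ (f - 1))"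
    by (cases f) (simp_all add: algebra_simps)
  also have "\<dots> = (n + 1) * (n ^ f + f * n ^ (f - 1)) - f * n ^ (f - 1)"
    by (simp add: algebra_simps)
  also have "\<dots> \<le> (n + 1) * (n + 1) ^ f" using Suc.IH by (meson diff_le_self le_trans mult_le_mono2)
  finally show ?case by simp
qed simp

lemma power_le_shorter:
  assumes "a + 2 \<le> b" "e' \<le> e" "1 \<le> b div 2"
  shows "(a div 2 + 1) ^ e' \<le> (b div 2 :: nat) ^ e"
proof -
  have "a div 2 + 1 \<le> b div 2" using div_le_mono[OF assms(1), of 2] by simp
  then show ?thesis using assms(2,3) by (meson le_trans power_increasing power_mono zero_le)
qed

theorem card_NC2_le: "card (NC2 w) \<le> (length w div 2 + 1) ^ (cyclic_changes w div 2 - 1)"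
proof (induction "length w" arbitrary: w rule: less_induct)
  case less
  show ?case
  proof (cases "NC2 w = {} \<or> w = []")
    case False
    then obtain P where P: "P \<in> NC2 w" and "w \<noteq> []" by auto
    obtain i where "i < length w" "w ! i \<noteq> w ! 0" using NC2_exists_change[OF P \<open>w \<noteq> []\<close>] by blast
    then obtain p where p: "0 < p" "p < length w" "\<And>i. i < p \<Longrightarrow> w ! i = w ! 0" "w ! p \<noteq> w ! 0"
      by (rule obtain_first_change) (rule that; assumption)
    define n f V where "n = length w div 2" and "f = cyclic_changes w div 2 - 1"
      and "V = partner_candidates w p"
    have "1 \<le> n"
      using NC2_length_eq[OF P, of True] \<open>w \<noteq> []\<close> unfolding n_def by (cases "count_list w True") auto
    have IH: "card (NC2 u) \<le> n ^ e"
      if "length u + 2 \<le> length w" "cyclic_changes u div 2 - 1 \<le> e" for u e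
      using less[of u] power_le_shorter[OF that \<open>1 \<le> n\<close>[unfolded n_def]] that(1)
      unfolding n_def by simp
    have "card (NC2 w) \<le> card (NC2 (outer_word w (p - 1) p))
        + (\<Sum>k\<in>V. card (NC2 (inner_word w p k)) * card (NC2 (outer_word w p k)))"
      unfolding V_def by (rule card_NC2_le_first_change_split[OF p(1-3)])
    also have "card (NC2 (outer_word w (p - 1) p)) \<le> n ^ f"
      using length_inner_outer_word[of "p - 1" p w] cyclic_changes_outer_word_le[of "p - 1" p w] p(1,2)
      unfolding f_def by (intro IH) (auto intro: div_le_mono diff_le_mono)
    also have "(\<Sum>k\<in>V. card (NC2 (inner_word w p k)) * card (NC2 (outer_word w p k)))
        \<le> (\<Sum>k\<in>V. n ^ (f - 1))"
    proof (rule sum_mono)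
      fix k assume k: "k \<in> V"
      define eI eO where "eI = cyclic_changes (inner_word w p k) div 2 - 1"
        and "eO = cyclic_changes (outer_word w p k) div 2 - 1"
      have pk: "p < k" "k < length w" using k unfolding V_def partner_candidates_def by auto
      have "card (NC2 (inner_word w p k)) * card (NC2 (outer_word w p k)) \<le> n ^ eI * n ^ eO"
        using length_inner_outer_word[OF pk] by (intro mult_le_mono IH) (auto simp: eI_def eO_def)
      moreover have "eI + eO \<le> f - 1"
        using cyclic_changes_partner_split[of p w "w ! 0" k, OF p(1) p(3) p(4)] k
        unfolding V_def f_def eI_def eO_def by linarith
      then have "n ^ eI * n ^ eO \<le> n ^ (f - 1)"
        using \<open>1 \<le> n\<close> by (simp add: power_add[symmetric] power_increasing)
      ultimately show "card (NC2 (inner_word w p k)) * card (NC2 (outer_word w p k)) \<le> n ^ (f - 1)"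
        by (rule le_trans)
    qed
    also have "(\<Sum>k\<in>V. n ^ (f - 1)) \<le> f * n ^ (f - 1)"
    proof -
      have "2 * card V + 2 \<le> cyclic_changes w"
        using card_partner_candidates_le[OF _ p(1,2,3,4) refl] P unfolding V_def by blast
      then have "card V \<le> f" unfolding f_def by presburger
      then show ?thesis by simp
    qed
    also have "n ^ f + f * n ^ (f - 1) \<le> (n + 1) ^ f" by (rule power_plus_mult_power_le)
    finally show ?thesis unfolding n_def f_def by simp
  qed auto
qed

subsection \<open>Run strings\<close>

lemma run_string_Cons:
  "run_string (a # ns) (b # ms) = replicate a True @ replicate b False @ run_string ns ms"
  unfolding run_string_def by simp

lemma length_run_string:
  "length ns = length ms \<Longrightarrow> length (run_string ns ms) = sum_list ns + sum_list ms"
proof (induction ns arbitrary: ms)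
  case (Cons a ns)
  then show ?case by (cases ms) (auto simp: run_string_Cons)
qed (simp add: run_string_def)

lemma changes_run_string_le: "length ns = length ms \<Longrightarrow> changes (run_string ns ms) \<le> 2 * length ns"
proof (induction ns arbitrary: ms)
  case (Cons a ns)
  then obtain b ms' where "ms = b # ms'" "length ns = length ms'" by (cases ms) auto
  then show ?case
    using Cons.IH[of ms'] by (auto simp: run_string_Cons changes_append)
qed (simp add: run_string_def)

lemma fact_le_power_pred: "fact (Suc m) \<le> (Suc m :: nat) ^ m"
proof (induction m)
  case (Suc m)
  have "fact (Suc (Suc m)) = Suc (Suc m) * fact (Suc m)" by simp
  also have "\<dots> \<le> Suc (Suc m) * Suc m ^ m" using Suc.IH by (rule mult_le_mono2)
  also have "\<dots> \<le> Suc (Suc m) * Suc (Suc m) ^ m" by (intro mult_le_mono2 power_mono) auto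
  finally show ?case by simp
qed simp

theorem corollary3p6:
  fixes ns ms :: "nat list" and r n :: nat
  assumes "length ns = r" and "length ms = r" and "r \<ge> 1"
    and "\<forall>x \<in> set ns. x \<ge> 1" and "\<forall>x \<in> set ms. x \<ge> 1"
    and "sum_list ns = n" and "sum_list ms = n"
  shows "real (card (NC2 (run_string ns ms)))
           \<le> real r ^ (r - 1) / fact r * (1 + real n) ^ (r - 1)"
proof -
  define S where "S = run_string ns ms"
  have "length S = 2 * n" using length_run_string[of ns ms] assms unfolding S_def by simp
  moreover have "cyclic_changes S div 2 - 1 \<le> r - 1"
    using changes_run_string_le[of ns ms] assms unfolding S_def cyclic_changes_def by auto
  ultimately have "card (NC2 S) \<le> (n + 1) ^ (r - 1)"
    using card_NC2_le[of S] power_increasing[of "cyclic_changes S div 2 - 1" "r - 1" "n + 1"]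
    by simp
  then have card_le: "real (card (NC2 S)) \<le> (1 + real n) ^ (r - 1)"
    using of_nat_le_iff[where 'a = real] by (metis add.commute of_nat_1 of_nat_add of_nat_power)
  have "fact r \<le> r ^ (r - 1)" using fact_le_power_pred[of "r - 1"] \<open>r \<ge> 1\<close> by simp
  then have "(fact r :: real) \<le> real r ^ (r - 1)" by (metis of_nat_fact of_nat_le_iff of_nat_power)
  then have "1 \<le> real r ^ (r - 1) / fact r" by simp
  then have "1 * (1 + real n) ^ (r - 1) \<le> real r ^ (r - 1) / fact r * (1 + real n) ^ (r - 1)"
    by (rule mult_right_mono) simp
  then show ?thesis using card_le unfolding S_def by linarith
qed

end
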